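(* Let $\lambda_a,\lambda_b\in\{1,2\}$ and let $u,t,v,w$ be integers such that: $u,t,vw$ are, in that order, three consecutive terms of $\langle u,t\rangle_{S_{\lambda_a,\lambda_b}}=\langle t,vw\rangle_{S_{3-\lambda_b,\lambda_a}}$, i.e. $(u,t)$ satisfies $S_{\lambda_a,\lambda_b}$ and $u\cdot vw=t^3+t^{\lambda_a}+1$; $v,t,uw$ are, in that order, three consecutive terms of a second 4-chain $\langle v,t\rangle_{S_{\lambda_a,\lambda_b}}=\langle t,uw\rangle_{S_{3-\lambda_b,\lambda_a}}$, i.e. $(v,t)$ satisfies $S_{\lambda_a,\lambda_b}$; $|t|$ is a prime; and $t\nmid(u-v)$. Then $(-w,t)$ satisfies $S_{\lambda_a,\lambda_b}$, so $-w,t,-uv$ are, in that order, three consecutive terms of a third 4-chain $\langle -w,t\rangle_{S_{\lambda_a,\lambda_b}}=\langle t,-uv\rangle_{S_{3-\lambda_b,\lambda_a}}$.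
   Context: For $\lambda_a,\lambda_b\in\{1,2\}$, a pair of integers $(x,y)$ satisfies the system $S_{\lambda_a,\lambda_b}$ if $x\mid y^3+y^{\lambda_a}+1$ and $y\mid x^3+x^{\lambda_b}+1$. For such a pair, $\langle x,y\rangle_{S_{\lambda_a,\lambda_b}}$ denotes the bi-infinite integer sequence $(u_n)$ with $u_0=x$, $u_1=y$ and $u_{n-1}u_{n+1}=u_n^3+u_n^{e_n}+1$ for all $n$, where $e_n$ has period 4 with $(e_0,e_1,e_2,e_3)=(\lambda_b,\lambda_a,3-\lambda_b,3-\lambda_a)$; sequences are identified up to shift and reversal of indices. "$u,t,s$, in that order, are three consecutive terms of $\langle u,t\rangle_{S_{\lambda_a,\lambda_b}}$" means $(u,t)$ satisfies $S_{\lambda_a,\lambda_b}$ and $us=t^3+t^{\lambda_a}+1$; in that case $(t,s)$ satisfies $S_{3-\lambda_b,\lambda_a}$ and the same chain is denoted $\langle t,s\rangle_{S_{3-\lambda_b,\lambda_a}}$. *)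

theory Defs
  imports "HOL-Computational_Algebra.Primes"
begin

definition satS :: "nat \<Rightarrow> nat \<Rightarrow> int \<Rightarrow> int \<Rightarrow> bool" where
  "satS la lb x y \<longleftrightarrow> x dvd y ^ 3 + y ^ la + 1 \<and> y dvd x ^ 3 + x ^ lb + 1"

definition consec3 :: "nat \<Rightarrow> nat \<Rightarrow> int \<Rightarrow> int \<Rightarrow> int \<Rightarrow> bool" where
  "consec3 la lb u t s \<longleftrightarrow> satS la lb u t \<and> u * s = t ^ 3 + t ^ la + 1"

end

theory Submission
  imports Defs
begin

text \<open>Both systems make \<open>u\<close> and \<open>v\<close> roots modulo the prime \<open>t\<close> of the monic cubic
  \<open>x^3 + x^lb + 1\<close>, and they are distinct modulo \<open>t\<close>. By Vieta the third root \<open>r\<close> satisfies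
  \<open>u v r \<equiv> -1\<close>, while \<open>u v w \<equiv> 1\<close> because \<open>u (v w) = t^3 + t^la + 1\<close>; hence \<open>r \<equiv> -w\<close>
  and \<open>t\<close> divides the cubic at \<open>-w\<close>.\<close>

lemma cubic_split_at_two_points:
  fixes a b c u v x :: "'a::comm_ring_1"
  shows "x ^ 3 + a * x\<^sup>2 + b * x + c =
    (x - u) * (x - v) * (x + (a + u + v)) + (u\<^sup>2 + u * v + v\<^sup>2 + a * (u + v) + b) * x
      + (c - u * v * (a + u + v))"
  by (simp add: algebra_simps power2_eq_square power3_eq_cube)

lemma prime_dvd_cubic_third_root:
  fixes p a b c u v w :: int
  defines "f \<equiv> \<lambda>x. x ^ 3 + a * x\<^sup>2 + b * x + c"
  assumes p: "prime_elem p"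
    and roots: "p dvd f u" "p dvd f v" and distinct: "\<not> p dvd u - v"
    and c: "\<not> p dvd c" and uvw: "p dvd u * v * w - c"
  shows "p dvd f (- w)"
proof -
  define s where "s = a + u + v"
  define g where "g = u\<^sup>2 + u * v + v\<^sup>2 + a * (u + v) + b"
  have split: "f x = (x - u) * (x - v) * (x + s) + g * x + (c - u * v * s)" for x
    unfolding f_def s_def g_def by (rule cubic_split_at_two_points)
  have "f u - f v = (u - v) * g"
    using split[of u] split[of v] by (simp add: algebra_simps)
  then have "p dvd (u - v) * g"
    using roots by (metis dvd_diff)
  then have g: "p dvd g"
    using p distinct prime_elem_dvd_mult_iff by blast
  have "c - u * v * s = f u - g * u"
    using split[of u] by simp
  then have uvs: "p dvd c - u * v * s"
    using roots g by (simp add: dvd_diff)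
  have "\<not> p dvd u * v"
  proof
    assume "p dvd u * v"
    then have "p dvd u * v * w - (u * v * w - c)"
      using uvw by (blast intro: dvd_diff dvd_mult2)
    with c show False by simp
  qed
  moreover have "p dvd u * v * (w - s)"
  proof -
    have "u * v * (w - s) = (u * v * w - c) + (c - u * v * s)"
      by (simp add: algebra_simps)
    then show ?thesis
      using uvs uvw by (metis dvd_add)
  qed
  ultimately have "p dvd w - s"
    using p prime_elem_dvd_mult_iff by blast
  then have "p dvd - w + s"
    by (metis dvd_minus_iff minus_diff_eq uminus_add_conv_diff)
  then show ?thesis
    using split[of "- w"] g uvs by (simp add: dvd_add)
qed

theorem mainTheorem16:
  fixes la lb :: nat and u t v w :: int
  assumes "la \<in> {1, 2}" and "lb \<in> {1, 2}"
    and "consec3 la lb u t (v * w)"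
    and "consec3 la lb v t (u * w)"
    and "prime \<bar>t\<bar>"
    and "\<not> t dvd (u - v)"
  shows "satS la lb (- w) t \<and> consec3 la lb (- w) t (- (u * v))"
proof -
  have prod: "u * (v * w) = t ^ 3 + t ^ la + 1"
    and fu: "t dvd u ^ 3 + u ^ lb + 1" and fv: "t dvd v ^ 3 + v ^ lb + 1"
    using assms(3,4) unfolding consec3_def satS_def by auto
  have prod': "(- w) * (- (u * v)) = t ^ 3 + t ^ la + 1"
    using prod by (simp add: algebra_simps)
  have "t dvd t ^ 3 + t ^ la"
    using assms(1) by auto
  then have uvw: "t dvd u * v * w - 1"
    using prod by (simp add: algebra_simps)
  obtain a b :: int where cubic: "\<And>x::int. x ^ lb = a * x\<^sup>2 + b * x"
    using assms(2) by (auto intro: that[of 0 1] that[of 1 0])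
  have "t dvd u ^ 3 + a * u\<^sup>2 + b * u + 1" "t dvd v ^ 3 + a * v\<^sup>2 + b * v + 1"
    using fu fv by (simp_all add: cubic add.assoc)
  then have "t dvd (- w) ^ 3 + a * (- w)\<^sup>2 + b * (- w) + 1"
    using prime_dvd_cubic_third_root[where p = t and c = 1] assms(5,6) uvw by simp
  then have "t dvd (- w) ^ 3 + (- w) ^ lb + 1"
    by (simp add: cubic add.assoc algebra_simps)
  moreover have "(- w) dvd t ^ 3 + t ^ la + 1"
    using prod' by (metis dvd_triv_left)
  ultimately show ?thesis
    using prod' unfolding consec3_def satS_def by auto
qed

end
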